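(* Let $p\ge 1$ and $m\ge 2$ be integers, and let $\mathbf{x}_1,\dots,\mathbf{x}_p\in\mathbb{R}^2$ be given nodes (neighbours of the origin $\mathbf{x}_0=\mathbf{0}$). Let $\varphi_1,\dots,\varphi_n$ be an enumeration of the set $$\Psi=\{x,\ y,\ x^2,\ xy,\ y^2,\ \dots,\ x^m,\ x^{m-1}y,\ \dots,\ y^m\}$$ of all monomials in $(x,y)$ of total degree between $1$ and $m$ (so $n=\binom{m+2}{2}-1$), ordered by nondecreasing degree. For $r>0$ define the $n\times p$ matrix $\Phi(r)$ by $\Phi(r)_{ik}=\varphi_i(r\mathbf{x}_k)$, set $\Phi=\Phi(1)$, and let $\mathbf{Y}=(\Delta\varphi_1(\mathbf{0}),\dots,\Delta\varphi_n(\mathbf{0}))^{\mathrm T}\in\mathbb{R}^n$. Assume $\Phi$ has full column rank $p$ (so that for every $r>0$ the linear system $\mathbf{Y}=\Phi(r)\boldsymbol{\omega}$ has a unique least-squares solution). Let $\boldsymbol{\omega}_r\in\mathbb{R}^p$ be this least-squares solution, i.e. the unique minimizer of $\|\mathbf{Y}-\Phi(r)\boldsymbol{\omega}\|_2$, and put $\boldsymbol{\eta}_r=r^2\boldsymbol{\omega}_r$. Then: 1) $\boldsymbol{\eta}_r$ is bounded as $r\to 0^+$, i.e. there exist $r_0>0$ and $C>0$ such that $\|\boldsymbol{\eta}_r\|\le C$ for all $r\in(0,r_0]$. 2) If $r_n\to 0^+$ and $\boldsymbol{\eta}=\lim_{n\to\infty}\boldsymbol{\eta}_{r_n}$ exists,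 then $\boldsymbol{\eta}$ is an approximation of the Laplacian $\Delta$ at $\mathbf{0}$ of the largest possible order, i.e. the order of $\boldsymbol{\eta}$ equals $\max_{\boldsymbol{\zeta}\in\mathbb{R}^p}\operatorname{ord}(\boldsymbol{\zeta})$.
   Context: Notation: $\Delta=\partial_x^2+\partial_y^2$ is the Laplacian on $\mathbb{R}^2$; thus $\Delta\varphi(\mathbf 0)=2$ for $\varphi\in\{x^2,y^2\}$ and $\Delta\varphi(\mathbf 0)=0$ for every other monomial in $\Psi$. A weight vector $\boldsymbol{\zeta}=(\zeta_1,\dots,\zeta_p)^{\mathrm T}\in\mathbb{R}^p$ defines the discrete Laplace approximation at $\mathbf 0$, $u\mapsto \sum_{k=1}^p \zeta_k\,[u(\mathbf{x}_k)-u(\mathbf 0)]$ (for the scaled nodes $r\mathbf{x}_k$ one uses $u\mapsto r^{-2}\sum_k\zeta_k[u(r\mathbf{x}_k)-u(\mathbf 0)]$). Order of approximation: $\boldsymbol{\zeta}$ is an approximation of $\Delta$ at $\mathbf 0$ of order $l$ ($0\le l\le m$), written $\operatorname{ord}(\boldsymbol{\zeta})=l$, if $l$ is the largest integer in $\{0,\dots,m\}$ such that $\sum_{k=1}^p\zeta_k\,\varphi(\mathbf{x}_k)=\Delta\varphi(\mathbf 0)$ holds for every monomial $\varphi\in\Psi$ of degree $\le l$ (the condition for $l=0$ is vacuous). Equivalently, by homogeneity $\varphi(r\mathbf{x})=r^{\deg\varphi}\varphi(\mathbf{x})$, the scaled operator $r^{-2}\sum_k\zeta_k[\varphi(r\mathbf{x}_k)-\varphi(\mathbf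 0)]$ reproduces $\Delta\varphi(\mathbf 0)$ exactly for all monomials of degree $\le l$, so that for polynomials $u$ the error $\Delta u(\mathbf 0)-r^{-2}\sum_k\zeta_k[u(r\mathbf{x}_k)-u(\mathbf 0)]$ is $O(r^{l-1})$ as $r\to0$. *)

theory Defs
  imports "HOL-Analysis.Analysis"
begin

text \<open>The monomials of Psi are encoded by their exponent pairs (a,b), standing for x^a y^b,
  with 1 \<le> a+b \<le> m.  Row ordering of Phi is irrelevant for the least-squares problem.\<close>

definition Psi :: "nat \<Rightarrow> (nat \<times> nat) set" where
  "Psi m = {(a, b). 1 \<le> a + b \<and> a + b \<le> m}"

definition mono :: "nat \<times> nat \<Rightarrow> real \<times> real \<Rightarrow> real" where
  "mono e z = fst z ^ fst e * snd z ^ snd e"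

definition mdeg :: "nat \<times> nat \<Rightarrow> nat" where
  "mdeg e = fst e + snd e"

definition lap0 :: "nat \<times> nat \<Rightarrow> real" where
  "lap0 e = (if e = (2, 0) \<or> e = (0, 2) then 2 else 0)"

definition Phi :: "('p::finite \<Rightarrow> real \<times> real) \<Rightarrow> real \<Rightarrow> nat \<times> nat \<Rightarrow> 'p \<Rightarrow> real" where
  "Phi x r e k = mono e (r *\<^sub>R x k)"

definition full_col_rank :: "nat \<Rightarrow> ('p::finite \<Rightarrow> real \<times> real) \<Rightarrow> bool" where
  "full_col_rank m x \<longleftrightarrow>
     (\<forall>w :: real ^ 'p. (\<forall>e \<in> Psi m. (\<Sum>k\<in>UNIV. Phi x 1 e k * w $ k) = 0) \<longrightarrow> w = 0)"

definition resid :: "nat \<Rightarrow> ('p::finite \<Rightarrow> real \<times> real) \<Rightarrow> real \<Rightarrow> real ^ 'p \<Rightarrow> real" where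
  "resid m x r w = (\<Sum>e \<in> Psi m. (lap0 e - (\<Sum>k\<in>UNIV. Phi x r e k * w $ k))\<^sup>2)"

definition reproduces :: "nat \<Rightarrow> ('p::finite \<Rightarrow> real \<times> real) \<Rightarrow> nat \<Rightarrow> real ^ 'p \<Rightarrow> bool" where
  "reproduces m x l z \<longleftrightarrow>
     (\<forall>e \<in> Psi m. mdeg e \<le> l \<longrightarrow> (\<Sum>k\<in>UNIV. z $ k * mono e (x k)) = lap0 e)"

definition ord_approx :: "nat \<Rightarrow> ('p::finite \<Rightarrow> real \<times> real) \<Rightarrow> real ^ 'p \<Rightarrow> nat" where
  "ord_approx m x z = (GREATEST l. l \<le> m \<and> reproduces m x l z)"

end

theory Submission
  imports Defs
begin

text \<open>Substituting \<open>\<eta> = r\<^sup>2 \<omega>\<close> and multiplying the residual by \<open>r\<^sup>2\<close> turns the least-squares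
  problem into the minimisation of \<open>\<Sum>\<^sub>e \<epsilon>^(deg e - 1) (\<Delta>\<phi>\<^sub>e(0) - \<phi>\<^sub>e \<bullet> \<eta>)\<^sup>2\<close> with \<open>\<epsilon> = r\<^sup>2\<close>.
  For such graded problems the minimisers are bounded uniformly in \<open>\<epsilon> \<in> (0,1]\<close>: the
  degree-1 rows control the component of \<open>\<eta>\<close> orthogonal to their common kernel, and
  induction on the number of levels handles the kernel.
  If some \<open>\<zeta>\<close> reproduces all levels below \<open>L\<close>, its residual is \<open>O(\<epsilon>^L)\<close>, which forces every
  minimiser to be within \<open>O(\<epsilon>)\<close> of reproducing those levels, so every limit reproduces them.\<close>

definition graded_residual ::
    "'e set \<Rightarrow> ('e \<Rightarrow> nat) \<Rightarrow> ('e \<Rightarrow> 'v::real_inner) \<Rightarrow> real \<Rightarrow> ('e \<Rightarrow> real) \<Rightarrow> 'v \<Rightarrow> real"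
  where "graded_residual E lev a \<epsilon> y \<eta> = (\<Sum>e\<in>E. \<epsilon> ^ lev e * (y e - a e \<bullet> \<eta>)\<^sup>2)"

definition graded_minimizer ::
    "'e set \<Rightarrow> ('e \<Rightarrow> nat) \<Rightarrow> ('e \<Rightarrow> 'v::real_inner) \<Rightarrow> real \<Rightarrow> ('e \<Rightarrow> real) \<Rightarrow> 'v set \<Rightarrow> 'v \<Rightarrow> bool"
  where "graded_minimizer E lev a \<epsilon> y S \<eta> \<longleftrightarrow>
    \<eta> \<in> S \<and> (\<forall>\<eta>'\<in>S. graded_residual E lev a \<epsilon> y \<eta> \<le> graded_residual E lev a \<epsilon> y \<eta>')"

lemma graded_residual_nonneg: "0 \<le> \<epsilon> \<Longrightarrow> 0 \<le> graded_residual E lev a \<epsilon> y \<eta>"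
  unfolding graded_residual_def by (intro sum_nonneg) auto

lemma graded_residual_term_le:
  "finite E \<Longrightarrow> e \<in> E \<Longrightarrow> 0 \<le> \<epsilon> \<Longrightarrow> \<epsilon> ^ lev e * (y e - a e \<bullet> \<eta>)\<^sup>2 \<le> graded_residual E lev a \<epsilon> y \<eta>"
  unfolding graded_residual_def by (rule member_le_sum) auto

lemma graded_residual_zero_le:
  assumes "0 \<le> \<epsilon>" "\<epsilon> \<le> 1"
  shows "graded_residual E lev a \<epsilon> y 0 \<le> (\<Sum>e\<in>E. (y e)\<^sup>2)"
  unfolding graded_residual_def
  by (intro sum_mono) (simp add: assms power_le_one mult_left_le_one_le)

lemma graded_residual_exact_le:
  assumes exact: "\<forall>e\<in>E. lev e < L \<longrightarrow> a e \<bullet> \<zeta> = y e" and "0 \<le> \<epsilon>" "\<epsilon> \<le> 1"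
  shows "graded_residual E lev a \<epsilon> y \<zeta> \<le> \<epsilon> ^ L * graded_residual E lev a 1 y \<zeta>"
  unfolding graded_residual_def sum_distrib_left
proof (intro sum_mono)
  fix e assume e: "e \<in> E"
  show "\<epsilon> ^ lev e * (y e - a e \<bullet> \<zeta>)\<^sup>2 \<le> \<epsilon> ^ L * (1 ^ lev e * (y e - a e \<bullet> \<zeta>)\<^sup>2)"
  proof (cases "lev e < L")
    case True
    then show ?thesis using exact e by simp
  next
    case False
    then have "\<epsilon> ^ lev e \<le> \<epsilon> ^ L" using assms by (intro power_decreasing) auto
    then show ?thesis by (simp add: mult_right_mono)
  qed
qed

lemma sum_power2_add_le: "(\<Sum>e\<in>E. (f e + g e)\<^sup>2) \<le> 2 * (\<Sum>e\<in>E. (f e)\<^sup>2) + 2 * (\<Sum>e\<in>E. (g e :: real)\<^sup>2)"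
proof -
  have "(f e + g e)\<^sup>2 \<le> 2 * (f e)\<^sup>2 + 2 * (g e)\<^sup>2" for e
    using sum_squares_ge_zero[of "f e - g e" 0] by (simp add: power2_eq_square algebra_simps)
  then have "(\<Sum>e\<in>E. (f e + g e)\<^sup>2) \<le> (\<Sum>e\<in>E. 2 * (f e)\<^sup>2 + 2 * (g e)\<^sup>2)"
    by (rule sum_mono)
  then show ?thesis by (simp add: sum.distrib sum_distrib_left)
qed

lemma sum_inner_power2_coercive:
  fixes a :: "'e \<Rightarrow> 'v::euclidean_space"
  assumes fin: "finite E" and "subspace T"
    and inj: "\<And>z. z \<in> T \<Longrightarrow> \<forall>e\<in>E. a e \<bullet> z = 0 \<Longrightarrow> z = 0"
  obtains c where "c \<ge> 0" "\<And>z. z \<in> T \<Longrightarrow> (norm z)\<^sup>2 \<le> c * (\<Sum>e\<in>E. (a e \<bullet> z)\<^sup>2)"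
proof -
  define f where "f z = (\<Sum>e\<in>E. (a e \<bullet> z) *\<^sub>R a e)" for z
  have "linear f"
    unfolding f_def
    by (intro linearI) (auto simp: inner_add_right scaleR_add_left sum.distrib scaleR_sum_right)
  then have "bounded_linear f" by (simp add: linear_conv_bounded_linear)
  have z_f: "z \<bullet> f z = (\<Sum>e\<in>E. (a e \<bullet> z)\<^sup>2)" for z
    unfolding f_def by (simp add: inner_sum_right power2_eq_square inner_commute)
  have "z = 0" if "z \<in> T" "f z = 0" for z
  proof -
    have "(\<Sum>e\<in>E. (a e \<bullet> z)\<^sup>2) = 0" using z_f[of z] that by simp
    then show ?thesis using inj \<open>z \<in> T\<close> by (simp add: sum_nonneg_eq_0_iff[OF fin])
  qed
  then obtain \<mu> where \<mu>: "\<mu> > 0" "\<And>z. z \<in> T \<Longrightarrow> \<mu> * norm z \<le> norm (f z)"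
    using injective_imp_isometric[OF closed_subspace \<open>subspace T\<close> \<open>bounded_linear f\<close>]
      \<open>subspace T\<close> by blast
  define A where "A = (\<Sum>e\<in>E. (norm (a e))\<^sup>2)"
  have f_bound: "(norm (f z))\<^sup>2 \<le> A * (\<Sum>e\<in>E. (a e \<bullet> z)\<^sup>2)" for z
  proof -
    have "norm (f z) \<le> (\<Sum>e\<in>E. \<bar>a e \<bullet> z\<bar> * norm (a e))"
      unfolding f_def by (rule order_trans[OF norm_sum]) simp
    then have "(norm (f z))\<^sup>2 \<le> (\<Sum>e\<in>E. \<bar>a e \<bullet> z\<bar> * norm (a e))\<^sup>2"
      by (simp add: power_mono)
    also have "\<dots> \<le> (\<Sum>e\<in>E. \<bar>a e \<bullet> z\<bar>\<^sup>2) * A"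
      unfolding A_def by (rule Cauchy_Schwarz_ineq_sum)
    finally show ?thesis by (simp add: mult.commute)
  qed
  show ?thesis
  proof
    show "0 \<le> A / \<mu>\<^sup>2" unfolding A_def by (simp add: sum_nonneg)
    fix z assume "z \<in> T"
    then have "(\<mu> * norm z)\<^sup>2 \<le> (norm (f z))\<^sup>2" using \<mu> by (intro power_mono) auto
    then have "\<mu>\<^sup>2 * (norm z)\<^sup>2 \<le> A * (\<Sum>e\<in>E. (a e \<bullet> z)\<^sup>2)"
      using f_bound[of z] by (simp add: power_mult_distrib)
    then show "(norm z)\<^sup>2 \<le> A / \<mu>\<^sup>2 * (\<Sum>e\<in>E. (a e \<bullet> z)\<^sup>2)"
      using \<mu> by (simp add: field_simps)
  qed
qed

lemma sum_power2_diff_inner_le: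
  fixes a :: "'e \<Rightarrow> 'v::real_inner"
  shows "(\<Sum>e\<in>E. (y e - a e \<bullet> t)\<^sup>2) \<le>
    2 * (\<Sum>e\<in>E. (y e)\<^sup>2) + 2 * (\<Sum>e\<in>E. (norm (a e))\<^sup>2) * (norm t)\<^sup>2"
proof -
  have "(\<Sum>e\<in>E. (a e \<bullet> t)\<^sup>2) \<le> (\<Sum>e\<in>E. (norm (a e))\<^sup>2 * (norm t)\<^sup>2)"
    by (intro sum_mono) (metis Cauchy_Schwarz_ineq power2_norm_eq_inner)
  also have "\<dots> = (\<Sum>e\<in>E. (norm (a e))\<^sup>2) * (norm t)\<^sup>2" by (simp add: sum_distrib_right)
  finally show ?thesis using sum_power2_add_le[of y "\<lambda>e. - (a e \<bullet> t)" E] by simp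
qed

lemma subspace_orthogonal_decomp:
  fixes K S :: "'v::euclidean_space set"
  assumes "subspace K" "subspace S" "K \<subseteq> S" "\<eta> \<in> S"
  obtains k t where "k \<in> K" "t \<in> S" "\<forall>w\<in>K. orthogonal t w" "\<eta> = t + k"
proof -
  obtain k t where "k \<in> span K" "\<And>w. w \<in> span K \<Longrightarrow> orthogonal t w" "\<eta> = k + t"
    using orthogonal_subspace_decomp_exists[of K \<eta>] by blast
  moreover have "k \<in> K" using \<open>k \<in> span K\<close> \<open>subspace K\<close> by (metis span_eq_iff)
  moreover have "t \<in> S"
    using subspace_diff[OF \<open>subspace S\<close> \<open>\<eta> \<in> S\<close>, of k] \<open>k \<in> K\<close> \<open>K \<subseteq> S\<close> \<open>\<eta> = k + t\<close> by auto
  ultimately show ?thesis using that span_base by (metis add.commute)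
qed

lemma graded_residual_split_level0:
  assumes "finite E" and k: "\<forall>e\<in>E. lev e = 0 \<longrightarrow> a e \<bullet> k = 0"
  shows "graded_residual E lev a \<epsilon> y (t + k) =
    (\<Sum>e\<in>{e\<in>E. lev e = 0}. (y e - a e \<bullet> t)\<^sup>2) +
    \<epsilon> * graded_residual {e\<in>E. lev e \<noteq> 0} (\<lambda>e. lev e - 1) a \<epsilon> (\<lambda>e. y e - a e \<bullet> t) k"
proof -
  have "graded_residual E lev a \<epsilon> y (t + k) =
      (\<Sum>e\<in>{e\<in>E. lev e = 0}. \<epsilon> ^ lev e * (y e - a e \<bullet> (t + k))\<^sup>2) +
      (\<Sum>e\<in>{e\<in>E. lev e \<noteq> 0}. \<epsilon> ^ lev e * (y e - a e \<bullet> (t + k))\<^sup>2)"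
    unfolding graded_residual_def using \<open>finite E\<close>
    by (subst sum.union_disjoint[symmetric]) (auto intro: sum.cong)
  also have "(\<Sum>e\<in>{e\<in>E. lev e = 0}. \<epsilon> ^ lev e * (y e - a e \<bullet> (t + k))\<^sup>2) =
      (\<Sum>e\<in>{e\<in>E. lev e = 0}. (y e - a e \<bullet> t)\<^sup>2)"
    using k by (intro sum.cong) (auto simp: inner_add_right)
  also have "(\<Sum>e\<in>{e\<in>E. lev e \<noteq> 0}. \<epsilon> ^ lev e * (y e - a e \<bullet> (t + k))\<^sup>2) =
      \<epsilon> * graded_residual {e\<in>E. lev e \<noteq> 0} (\<lambda>e. lev e - 1) a \<epsilon> (\<lambda>e. y e - a e \<bullet> t) k"
    unfolding graded_residual_def sum_distrib_left
  proof (intro sum.cong refl)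
    fix e assume "e \<in> {e\<in>E. lev e \<noteq> 0}"
    then have "\<epsilon> ^ lev e = \<epsilon> * \<epsilon> ^ (lev e - 1)" by (simp flip: power_Suc)
    then show "\<epsilon> ^ lev e * (y e - a e \<bullet> (t + k))\<^sup>2 =
        \<epsilon> * (\<epsilon> ^ (lev e - 1) * (y e - a e \<bullet> t - a e \<bullet> k)\<^sup>2)"
      by (simp add: inner_add_right algebra_simps)
  qed
  finally show ?thesis .
qed

lemma graded_minimizer_split_level0:
  fixes E :: "'e set" and lev :: "'e \<Rightarrow> nat" and a :: "'e \<Rightarrow> 'v::real_inner" and S :: "'v set"
  defines "K \<equiv> {\<eta>\<in>S. \<forall>e\<in>E. lev e = 0 \<longrightarrow> a e \<bullet> \<eta> = 0}"
  assumes "finite E" "subspace S" "0 < \<epsilon>" "\<epsilon> \<le> 1"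
    and min: "graded_minimizer E lev a \<epsilon> y S (t + k)" and "t \<in> S" "k \<in> K"
  shows "graded_minimizer {e\<in>E. lev e \<noteq> 0} (\<lambda>e. lev e - 1) a \<epsilon> (\<lambda>e. y e - a e \<bullet> t) K k"
    and "(\<Sum>e\<in>{e\<in>E. lev e = 0}. (y e - a e \<bullet> t)\<^sup>2) \<le> (\<Sum>e\<in>E. (y e)\<^sup>2)"
proof -
  note split = graded_residual_split_level0[OF \<open>finite E\<close>, of lev a _ \<epsilon> y t]
  show "graded_minimizer {e\<in>E. lev e \<noteq> 0} (\<lambda>e. lev e - 1) a \<epsilon> (\<lambda>e. y e - a e \<bullet> t) K k"
    unfolding graded_minimizer_def
  proof (intro conjI ballI)
    fix k' assume "k' \<in> K"
    then have "t + k' \<in> S" using \<open>t \<in> S\<close> \<open>subspace S\<close> by (auto simp: K_def intro: subspace_add)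
    then have "graded_residual E lev a \<epsilon> y (t + k) \<le> graded_residual E lev a \<epsilon> y (t + k')"
      using min by (simp add: graded_minimizer_def)
    then show "graded_residual {e\<in>E. lev e \<noteq> 0} (\<lambda>e. lev e - 1) a \<epsilon> (\<lambda>e. y e - a e \<bullet> t) k
        \<le> graded_residual {e\<in>E. lev e \<noteq> 0} (\<lambda>e. lev e - 1) a \<epsilon> (\<lambda>e. y e - a e \<bullet> t) k'"
      using split[of k] split[of k'] \<open>k \<in> K\<close> \<open>k' \<in> K\<close> \<open>0 < \<epsilon>\<close> by (simp add: K_def)
  qed (fact \<open>k \<in> K\<close>)
  have "(\<Sum>e\<in>{e\<in>E. lev e = 0}. (y e - a e \<bullet> t)\<^sup>2) \<le> graded_residual E lev a \<epsilon> y (t + k)"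
    using split[of k] \<open>k \<in> K\<close> \<open>0 < \<epsilon>\<close>
    by (simp add: K_def graded_residual_nonneg)
  also have "\<dots> \<le> graded_residual E lev a \<epsilon> y 0"
    using min \<open>subspace S\<close> by (simp add: graded_minimizer_def subspace_0)
  also have "\<dots> \<le> (\<Sum>e\<in>E. (y e)\<^sup>2)"
    using \<open>0 < \<epsilon>\<close> \<open>\<epsilon> \<le> 1\<close> by (intro graded_residual_zero_le) auto
  finally show "(\<Sum>e\<in>{e\<in>E. lev e = 0}. (y e - a e \<bullet> t)\<^sup>2) \<le> (\<Sum>e\<in>E. (y e)\<^sup>2)" .
qed

lemma graded_minimizers_bounded_step:
  fixes E :: "'e set" and lev :: "'e \<Rightarrow> nat" and a :: "'e \<Rightarrow> 'v::euclidean_space" and S :: "'v set"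
  defines "K \<equiv> {\<eta>\<in>S. \<forall>e\<in>E. lev e = 0 \<longrightarrow> a e \<bullet> \<eta> = 0}"
  assumes "finite E" "subspace S"
    and inj: "\<And>\<eta>. \<eta> \<in> S \<Longrightarrow> \<forall>e\<in>E. a e \<bullet> \<eta> = 0 \<Longrightarrow> \<eta> = 0"
    and C1: "\<And>\<epsilon> y k. 0 < \<epsilon> \<Longrightarrow> \<epsilon> \<le> 1 \<Longrightarrow>
      graded_minimizer {e\<in>E. lev e \<noteq> 0} (\<lambda>e. lev e - 1) a \<epsilon> y K k \<Longrightarrow>
      (norm k)\<^sup>2 \<le> C1 * (\<Sum>e\<in>{e\<in>E. lev e \<noteq> 0}. (y e)\<^sup>2)"
  shows "\<exists>C. \<forall>\<epsilon> y \<eta>. 0 < \<epsilon> \<longrightarrow> \<epsilon> \<le> 1 \<longrightarrow> graded_minimizer E lev a \<epsilon> y S \<eta> \<longrightarrow>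
    (norm \<eta>)\<^sup>2 \<le> C * (\<Sum>e\<in>E. (y e)\<^sup>2)"
proof -
  define E0 where "E0 = {e\<in>E. lev e = 0}"
  define E1 where "E1 = {e\<in>E. lev e \<noteq> 0}"
  define T where "T = {z\<in>S. \<forall>w\<in>K. z \<bullet> w = 0}"
  have "subspace K" "subspace T"
    using \<open>subspace S\<close> unfolding K_def T_def subspace_def by (auto simp: inner_add_right inner_add_left)
  have "z = 0" if "z \<in> T" "\<forall>e\<in>E0. a e \<bullet> z = 0" for z
  proof -
    have "z \<in> K" using that by (auto simp: K_def T_def E0_def)
    then have "z \<bullet> z = 0" using \<open>z \<in> T\<close> by (auto simp: T_def)
    then show ?thesis by simp
  qed
  then obtain c where "c \<ge> 0" and c: "\<And>z. z \<in> T \<Longrightarrow> (norm z)\<^sup>2 \<le> c * (\<Sum>e\<in>E0. (a e \<bullet> z)\<^sup>2)"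
    using sum_inner_power2_coercive[of E0 T a] \<open>finite E\<close> \<open>subspace T\<close> by (auto simp: E0_def)
  define A where "A = (\<Sum>e\<in>E. (norm (a e))\<^sup>2)"
  have "A \<ge> 0" by (simp add: A_def sum_nonneg)
  show ?thesis
  proof (intro exI[of _ "4 * c + max C1 0 * (2 + 8 * A * c)"] allI impI)
    fix \<epsilon> y \<eta> assume \<epsilon>: "0 < \<epsilon>" "\<epsilon> \<le> 1" and min: "graded_minimizer E lev a \<epsilon> y S \<eta>"
    define Q where "Q = (\<Sum>e\<in>E. (y e)\<^sup>2)"
    have E0_le_Q: "(\<Sum>e\<in>E0. f e) \<le> (\<Sum>e\<in>E. f e)" and E1_le_Q: "(\<Sum>e\<in>E1. f e) \<le> (\<Sum>e\<in>E. f e)"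
      if "\<And>e. 0 \<le> f e" for f :: "'e \<Rightarrow> real"
      using that \<open>finite E\<close> by (auto simp: E0_def E1_def intro: sum_mono2)
    have "\<eta> \<in> S" using min by (simp add: graded_minimizer_def)
    moreover have "K \<subseteq> S" by (auto simp: K_def)
    ultimately obtain k t where "k \<in> K" "t \<in> S" and orth: "\<forall>w\<in>K. orthogonal t w" and "\<eta> = t + k"
      using subspace_orthogonal_decomp[OF \<open>subspace K\<close> \<open>subspace S\<close>] by blast
    have "t \<in> T" using \<open>t \<in> S\<close> orth by (simp add: T_def orthogonal_def)
    note split = graded_minimizer_split_level0[OF \<open>finite E\<close> \<open>subspace S\<close> \<epsilon>
        min[unfolded \<open>\<eta> = t + k\<close>] \<open>t \<in> S\<close> \<open>k \<in> K\<close>[unfolded K_def]]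
    have "(\<Sum>e\<in>E0. (a e \<bullet> t)\<^sup>2) = (\<Sum>e\<in>E0. (y e + - (y e - a e \<bullet> t))\<^sup>2)" by simp
    also have "\<dots> \<le> 2 * (\<Sum>e\<in>E0. (y e)\<^sup>2) + 2 * (\<Sum>e\<in>E0. (y e - a e \<bullet> t)\<^sup>2)"
      using sum_power2_add_le[of y "\<lambda>e. - (y e - a e \<bullet> t)" E0] by (simp only: power2_minus)
    also have "\<dots> \<le> 4 * Q"
      using split(2) E0_le_Q[of "\<lambda>e. (y e)\<^sup>2"] by (simp add: Q_def E0_def)
    finally have "(norm t)\<^sup>2 \<le> c * (4 * Q)"
      using c[OF \<open>t \<in> T\<close>] mult_left_mono[OF _ \<open>c \<ge> 0\<close>] by (meson order_trans)
    then have t_bound: "(norm t)\<^sup>2 \<le> 4 * c * Q" by simp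
    have "(\<Sum>e\<in>E1. (y e - a e \<bullet> t)\<^sup>2) \<le> 2 * Q + 2 * A * (4 * c * Q)"
      using sum_power2_diff_inner_le[of y a t E1] E1_le_Q[of "\<lambda>e. (y e)\<^sup>2"]
        E1_le_Q[of "\<lambda>e. (norm (a e))\<^sup>2"] t_bound \<open>A \<ge> 0\<close>
      by (smt (verit) A_def Q_def mult_mono sum_nonneg zero_le_power2 mult_left_mono)
    then have y'_bound: "(\<Sum>e\<in>E1. (y e - a e \<bullet> t)\<^sup>2) \<le> (2 + 8 * A * c) * Q"
      by (simp add: algebra_simps)
    have "(norm k)\<^sup>2 \<le> C1 * (\<Sum>e\<in>E1. (y e - a e \<bullet> t)\<^sup>2)"
      using C1[OF \<epsilon> split(1)[folded K_def]] by (simp add: E1_def)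
    also have "\<dots> \<le> max C1 0 * (\<Sum>e\<in>E1. (y e - a e \<bullet> t)\<^sup>2)"
      by (intro mult_right_mono) (simp_all add: sum_nonneg)
    also have "\<dots> \<le> max C1 0 * ((2 + 8 * A * c) * Q)"
      using y'_bound by (intro mult_left_mono) simp_all
    finally have k_bound: "(norm k)\<^sup>2 \<le> max C1 0 * ((2 + 8 * A * c) * Q)" .
    have "(norm \<eta>)\<^sup>2 = (norm t)\<^sup>2 + (norm k)\<^sup>2"
      using norm_add_Pythagorean orth \<open>k \<in> K\<close> \<open>\<eta> = t + k\<close> by blast
    also have "\<dots> \<le> (4 * c + max C1 0 * (2 + 8 * A * c)) * Q"
      using t_bound k_bound by (simp add: algebra_simps)
    finally show "(norm \<eta>)\<^sup>2 \<le> (4 * c + max C1 0 * (2 + 8 * A * c)) * (\<Sum>e\<in>E. (y e)\<^sup>2)"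
      by (simp add: Q_def)
  qed
qed

lemma graded_minimizers_bounded:
  fixes a :: "'e \<Rightarrow> 'v::euclidean_space"
  assumes "finite E" "subspace S" "\<forall>e\<in>E. lev e < N"
    and "\<And>\<eta>. \<eta> \<in> S \<Longrightarrow> \<forall>e\<in>E. a e \<bullet> \<eta> = 0 \<Longrightarrow> \<eta> = 0"
  shows "\<exists>C. \<forall>\<epsilon> y \<eta>. 0 < \<epsilon> \<longrightarrow> \<epsilon> \<le> 1 \<longrightarrow> graded_minimizer E lev a \<epsilon> y S \<eta> \<longrightarrow>
    (norm \<eta>)\<^sup>2 \<le> C * (\<Sum>e\<in>E. (y e)\<^sup>2)"
  using assms
proof (induction N arbitrary: E lev S)
  case 0
  then have "S \<subseteq> {0}" by auto
  then show ?case by (intro exI[of _ 0]) (auto simp: graded_minimizer_def)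
next
  case (Suc N)
  define K where "K = {\<eta>\<in>S. \<forall>e\<in>E. lev e = 0 \<longrightarrow> a e \<bullet> \<eta> = 0}"
  have "finite {e\<in>E. lev e \<noteq> 0}" using \<open>finite E\<close> by simp
  moreover have "subspace K"
    using \<open>subspace S\<close> unfolding K_def subspace_def by (auto simp: inner_add_right)
  moreover have "\<forall>e\<in>{e\<in>E. lev e \<noteq> 0}. lev e - 1 < N" using Suc.prems(3) by auto
  moreover have "\<eta> = 0" if "\<eta> \<in> K" "\<forall>e\<in>{e\<in>E. lev e \<noteq> 0}. a e \<bullet> \<eta> = 0" for \<eta>
    using that Suc.prems(4) by (auto simp: K_def)
  ultimately obtain C1 where "\<forall>\<epsilon> y k. 0 < \<epsilon> \<longrightarrow> \<epsilon> \<le> 1 \<longrightarrow>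
      graded_minimizer {e\<in>E. lev e \<noteq> 0} (\<lambda>e. lev e - 1) a \<epsilon> y K k \<longrightarrow>
      (norm k)\<^sup>2 \<le> C1 * (\<Sum>e\<in>{e\<in>E. lev e \<noteq> 0}. (y e)\<^sup>2)"
    using Suc.IH[of "{e\<in>E. lev e \<noteq> 0}" K "\<lambda>e. lev e - 1"] by blast
  then show ?case
    using graded_minimizers_bounded_step[of E S a lev C1] Suc.prems unfolding K_def by blast
qed

lemma graded_minimizer_limit_exact:
  fixes a :: "'e \<Rightarrow> 'v::real_inner"
  assumes "finite E" and \<epsilon>: "\<And>n. 0 < \<epsilon> n" "\<epsilon> \<longlonglongrightarrow> 0"
    and min: "\<And>n. graded_minimizer E lev a (\<epsilon> n) y UNIV (\<eta> n)" and "\<eta> \<longlonglongrightarrow> \<eta>\<^sub>0"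
    and exact: "\<forall>e\<in>E. lev e < L \<longrightarrow> a e \<bullet> \<zeta> = y e"
    and "e \<in> E" "lev e < L"
  shows "a e \<bullet> \<eta>\<^sub>0 = y e"
proof -
  define B where "B = graded_residual E lev a 1 y \<zeta>"
  have "B \<ge> 0" by (simp add: B_def graded_residual_nonneg)
  have "\<forall>\<^sub>F n in sequentially. \<epsilon> n < 1" using \<epsilon>(2) by (intro order_tendstoD) auto
  then have "\<forall>\<^sub>F n in sequentially. (y e - a e \<bullet> \<eta> n)\<^sup>2 \<le> \<epsilon> n * B"
  proof (rule eventually_mono)
    fix n assume "\<epsilon> n < 1"
    have "\<epsilon> n ^ lev e * (y e - a e \<bullet> \<eta> n)\<^sup>2 \<le> graded_residual E lev a (\<epsilon> n) y (\<eta> n)"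
      using \<open>finite E\<close> \<open>e \<in> E\<close> \<epsilon>(1)[of n] by (intro graded_residual_term_le) auto
    also have "\<dots> \<le> graded_residual E lev a (\<epsilon> n) y \<zeta>"
      using min[of n] by (simp add: graded_minimizer_def)
    also have "\<dots> \<le> \<epsilon> n ^ L * B"
      unfolding B_def using exact \<epsilon>(1)[of n] \<open>\<epsilon> n < 1\<close> by (intro graded_residual_exact_le) auto
    also have "\<dots> = \<epsilon> n ^ lev e * (\<epsilon> n ^ (L - lev e) * B)"
      using \<open>lev e < L\<close> by (simp add: mult.assoc flip: power_add)
    finally have "(y e - a e \<bullet> \<eta> n)\<^sup>2 \<le> \<epsilon> n ^ (L - lev e) * B"
      using \<epsilon>(1)[of n] by simp
    also have "\<dots> \<le> \<epsilon> n ^ 1 * B"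
      using \<epsilon>(1)[of n] \<open>\<epsilon> n < 1\<close> \<open>lev e < L\<close> \<open>B \<ge> 0\<close>
      by (intro mult_right_mono power_decreasing) auto
    finally show "(y e - a e \<bullet> \<eta> n)\<^sup>2 \<le> \<epsilon> n * B" by simp
  qed
  moreover have "(\<lambda>n. (y e - a e \<bullet> \<eta> n)\<^sup>2) \<longlonglongrightarrow> (y e - a e \<bullet> \<eta>\<^sub>0)\<^sup>2"
    using \<open>\<eta> \<longlonglongrightarrow> \<eta>\<^sub>0\<close> by (intro tendsto_intros)
  moreover have "(\<lambda>n. \<epsilon> n * B) \<longlonglongrightarrow> 0 * B"
    using \<epsilon>(2) by (intro tendsto_intros)
  ultimately have "(y e - a e \<bullet> \<eta>\<^sub>0)\<^sup>2 \<le> 0 * B"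
    using tendsto_le[OF trivial_limit_sequentially] by blast
  then show ?thesis by simp
qed

definition Phi_row :: "('p::finite \<Rightarrow> real \<times> real) \<Rightarrow> nat \<times> nat \<Rightarrow> real ^ 'p" where
  "Phi_row x e = (\<chi> k. mono e (x k))"

lemma inner_Phi_row: "Phi_row x e \<bullet> w = (\<Sum>k\<in>UNIV. mono e (x k) * w $ k)"
  by (simp add: Phi_row_def inner_vec_def)

lemma finite_Psi: "finite (Psi m)"
  by (rule finite_subset[of _ "{0..m} \<times> {0..m}"]) (auto simp: Psi_def)

lemma mdeg_Psi: "e \<in> Psi m \<Longrightarrow> 1 \<le> mdeg e \<and> mdeg e \<le> m"
  by (auto simp: Psi_def mdeg_def)

lemma mdeg_eq_2_if_lap0_nonzero: "lap0 e \<noteq> 0 \<Longrightarrow> mdeg e = 2"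
  by (auto simp: lap0_def mdeg_def split: if_splits)

lemma mono_scaleR: "mono e (r *\<^sub>R z) = r ^ mdeg e * mono e z"
  by (cases z) (simp add: mono_def mdeg_def power_mult_distrib power_add)

lemma full_col_rank_iff_Phi_row:
  "full_col_rank m x \<longleftrightarrow> (\<forall>\<eta>. (\<forall>e\<in>Psi m. Phi_row x e \<bullet> \<eta> = 0) \<longrightarrow> \<eta> = 0)"
  by (simp add: full_col_rank_def Phi_def inner_Phi_row)

lemma reproduces_iff_Phi_row:
  "reproduces m x l z \<longleftrightarrow> (\<forall>e\<in>Psi m. mdeg e - 1 < l \<longrightarrow> Phi_row x e \<bullet> z = lap0 e)"
proof -
  have "mdeg e - 1 < l \<longleftrightarrow> mdeg e \<le> l" if "e \<in> Psi m" for e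
    using mdeg_Psi[OF that] by linarith
  then show ?thesis by (auto simp: reproduces_def inner_Phi_row mult.commute)
qed

lemma ord_approx_le: "ord_approx m x z \<le> m"
  and reproduces_ord_approx: "reproduces m x (ord_approx m x z) z"
proof -
  have "reproduces m x 0 z" unfolding reproduces_def using mdeg_Psi by fastforce
  have "ord_approx m x z \<le> m \<and> reproduces m x (ord_approx m x z) z"
    unfolding ord_approx_def
    by (rule GreatestI_nat[of _ 0 m]) (use \<open>reproduces m x 0 z\<close> in auto)
  then show "ord_approx m x z \<le> m" "reproduces m x (ord_approx m x z) z" by auto
qed

lemma le_ord_approx: "l \<le> m \<Longrightarrow> reproduces m x l z \<Longrightarrow> l \<le> ord_approx m x z"
  unfolding ord_approx_def by (rule Greatest_le_nat[of _ l m]) auto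

text \<open>The premise on \<open>L\<close> is where it enters that only degree-2 monomials have nonzero
  Laplacian at the origin.\<close>
lemma rescale_residual_term:
  fixes r L s :: real
  assumes "1 \<le> d" and "L \<noteq> 0 \<Longrightarrow> d = 2"
  shows "r\<^sup>2 * (L - r ^ d * s)\<^sup>2 = (r\<^sup>2) ^ (d - 1) * (L - r\<^sup>2 * s)\<^sup>2"
proof (cases "L = 0")
  case True
  obtain j where "d = Suc j" using \<open>1 \<le> d\<close> by (cases d) auto
  then show ?thesis unfolding True
    by (simp add: power_mult_distrib power_mult[symmetric] power_add[symmetric] algebra_simps)
qed (use assms in simp)

lemma resid_eq_graded_residual:
  "r\<^sup>2 * resid m x r w =
    graded_residual (Psi m) (\<lambda>e. mdeg e - 1) (Phi_row x) (r\<^sup>2) lap0 (r\<^sup>2 *\<^sub>R w)"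
  unfolding resid_def graded_residual_def sum_distrib_left
proof (intro sum.cong refl)
  fix e assume "e \<in> Psi m"
  have "(\<Sum>k\<in>UNIV. Phi x r e k * w $ k) = r ^ mdeg e * (Phi_row x e \<bullet> w)"
    by (simp add: Phi_def mono_scaleR inner_Phi_row sum_distrib_left mult.assoc)
  then show "r\<^sup>2 * (lap0 e - (\<Sum>k\<in>UNIV. Phi x r e k * w $ k))\<^sup>2 =
      (r\<^sup>2) ^ (mdeg e - 1) * (lap0 e - Phi_row x e \<bullet> (r\<^sup>2 *\<^sub>R w))\<^sup>2"
    using rescale_residual_term mdeg_Psi[OF \<open>e \<in> Psi m\<close>] mdeg_eq_2_if_lap0_nonzero by simp
qed

lemma scaled_lsq_weights_graded_minimizer:
  assumes "r > 0" and "\<And>w. resid m x r (\<omega> r) \<le> resid m x r w"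
  shows "graded_minimizer (Psi m) (\<lambda>e. mdeg e - 1) (Phi_row x) (r\<^sup>2) lap0 UNIV (r\<^sup>2 *\<^sub>R \<omega> r)"
  unfolding graded_minimizer_def
proof (intro conjI ballI UNIV_I)
  fix \<eta>
  have "r\<^sup>2 * resid m x r (\<omega> r) \<le> r\<^sup>2 * resid m x r (inverse (r\<^sup>2) *\<^sub>R \<eta>)"
    using assms by (intro mult_left_mono) auto
  then show "graded_residual (Psi m) (\<lambda>e. mdeg e - 1) (Phi_row x) (r\<^sup>2) lap0 (r\<^sup>2 *\<^sub>R \<omega> r)
      \<le> graded_residual (Psi m) (\<lambda>e. mdeg e - 1) (Phi_row x) (r\<^sup>2) lap0 \<eta>"
    using \<open>r > 0\<close> by (simp add: resid_eq_graded_residual)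
qed

lemma scaled_lsq_weights_bounded:
  assumes "full_col_rank m x" and "\<And>r w. r > 0 \<Longrightarrow> resid m x r (\<omega> r) \<le> resid m x r w"
  shows "\<exists>r0 > 0. \<exists>C > 0. \<forall>r. 0 < r \<and> r \<le> r0 \<longrightarrow> norm ((r\<^sup>2) *\<^sub>R \<omega> r) \<le> C"
proof -
  have "\<exists>C. \<forall>\<epsilon> y \<eta>. 0 < \<epsilon> \<longrightarrow> \<epsilon> \<le> 1 \<longrightarrow>
      graded_minimizer (Psi m) (\<lambda>e. mdeg e - 1) (Phi_row x) \<epsilon> y UNIV \<eta> \<longrightarrow>
      (norm \<eta>)\<^sup>2 \<le> C * (\<Sum>e\<in>Psi m. (y e)\<^sup>2)"
  proof (rule graded_minimizers_bounded[OF finite_Psi subspace_UNIV])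
    show "\<forall>e\<in>Psi m. mdeg e - 1 < m" using mdeg_Psi by fastforce
    show "\<eta> = 0" if "\<forall>e\<in>Psi m. Phi_row x e \<bullet> \<eta> = 0" for \<eta>
      using assms(1) that by (simp add: full_col_rank_iff_Phi_row)
  qed
  then obtain C where C: "\<And>\<epsilon> y \<eta>. 0 < \<epsilon> \<Longrightarrow> \<epsilon> \<le> 1 \<Longrightarrow>
      graded_minimizer (Psi m) (\<lambda>e. mdeg e - 1) (Phi_row x) \<epsilon> y UNIV \<eta> \<Longrightarrow>
      (norm \<eta>)\<^sup>2 \<le> C * (\<Sum>e\<in>Psi m. (y e)\<^sup>2)"
    by blast
  define Q where "Q = (\<Sum>e\<in>Psi m. (lap0 e)\<^sup>2)"
  have "norm (r\<^sup>2 *\<^sub>R \<omega> r) \<le> sqrt \<bar>C * Q\<bar> + 1" if "0 < r" "r \<le> 1" for r :: real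
  proof -
    have "(norm (r\<^sup>2 *\<^sub>R \<omega> r))\<^sup>2 \<le> C * Q"
      unfolding Q_def
    proof (rule C)
      show "0 < r\<^sup>2" "r\<^sup>2 \<le> 1" using that by (simp_all add: power_le_one)
      show "graded_minimizer (Psi m) (\<lambda>e. mdeg e - 1) (Phi_row x) (r\<^sup>2) lap0 UNIV (r\<^sup>2 *\<^sub>R \<omega> r)"
        using \<open>0 < r\<close> assms(2)[OF \<open>0 < r\<close>] by (rule scaled_lsq_weights_graded_minimizer)
    qed
    then have "norm (r\<^sup>2 *\<^sub>R \<omega> r) \<le> sqrt \<bar>C * Q\<bar>" by (intro real_le_rsqrt) simp
    then show ?thesis by simp
  qed
  moreover have "sqrt \<bar>C * Q\<bar> + 1 > 0" by (simp add: add_nonneg_pos)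
  ultimately show ?thesis using zero_less_one by blast
qed

lemma scaled_lsq_weights_limit_max_order:
  assumes ls: "\<And>r w. r > 0 \<Longrightarrow> resid m x r (\<omega> r) \<le> resid m x r w"
    and s: "\<And>n. s n > 0" "s \<longlonglongrightarrow> 0" and lim: "(\<lambda>n. (s n)\<^sup>2 *\<^sub>R \<omega> (s n)) \<longlonglongrightarrow> \<eta>"
  shows "ord_approx m x \<eta> = Max (range (ord_approx m x))"
proof -
  define M where "M = Max (range (ord_approx m x))"
  have fin: "finite (range (ord_approx m x))"
    by (rule finite_subset[of _ "{0..m}"]) (auto simp: ord_approx_le)
  have "M \<in> range (ord_approx m x)" unfolding M_def using fin by (rule Max_in) simp
  then obtain \<zeta> where \<zeta>: "ord_approx m x \<zeta> = M" by blast
  have "M \<le> m" using ord_approx_le[of m x \<zeta>] \<zeta> by simp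
  have "reproduces m x M \<zeta>" using reproduces_ord_approx[of m x \<zeta>] \<zeta> by simp
  then have exact: "\<forall>e\<in>Psi m. mdeg e - 1 < M \<longrightarrow> Phi_row x e \<bullet> \<zeta> = lap0 e"
    by (simp add: reproduces_iff_Phi_row)
  have pos: "0 < (s n)\<^sup>2" for n using s(1)[of n] by simp
  have sq_lim: "(\<lambda>n. (s n)\<^sup>2) \<longlonglongrightarrow> 0" using tendsto_power[OF s(2), of 2] by simp
  have min: "graded_minimizer (Psi m) (\<lambda>e. mdeg e - 1) (Phi_row x) ((s n)\<^sup>2) lap0 UNIV
      ((s n)\<^sup>2 *\<^sub>R \<omega> (s n))" for n
    using s(1)[of n] ls[OF s(1)[of n]] by (rule scaled_lsq_weights_graded_minimizer)
  have "Phi_row x e \<bullet> \<eta> = lap0 e" if "e \<in> Psi m" "mdeg e - 1 < M" for e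
    using graded_minimizer_limit_exact[OF finite_Psi pos sq_lim min lim exact that] .
  then have "reproduces m x M \<eta>" by (simp add: reproduces_iff_Phi_row)
  then have "M \<le> ord_approx m x \<eta>" using \<open>M \<le> m\<close> by (intro le_ord_approx)
  moreover have "ord_approx m x \<eta> \<le> M" unfolding M_def using fin by (intro Max_ge) auto
  ultimately show ?thesis unfolding M_def by simp
qed

theorem lemma3p2:
  fixes m :: nat and x :: "'p::finite \<Rightarrow> real \<times> real"
    and \<omega> :: "real \<Rightarrow> real ^ 'p"
  assumes m2: "m \<ge> 2"
    and rank: "full_col_rank m x"
    and ls: "\<And>r w. r > 0 \<Longrightarrow> resid m x r (\<omega> r) \<le> resid m x r w"
  shows "(\<exists>r0 > 0. \<exists>C > 0. \<forall>r. 0 < r \<and> r \<le> r0 \<longrightarrow> norm ((r\<^sup>2) *\<^sub>R \<omega> r) \<le> C)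
    \<and> (\<forall>(s :: nat \<Rightarrow> real) \<eta>. (\<forall>n. s n > 0) \<longrightarrow> s \<longlonglongrightarrow> 0 \<longrightarrow>
         (\<lambda>n. (s n)\<^sup>2 *\<^sub>R \<omega> (s n)) \<longlonglongrightarrow> \<eta> \<longrightarrow>
         ord_approx m x \<eta> = Max (range (ord_approx m x)))"
  using scaled_lsq_weights_bounded[OF rank ls] scaled_lsq_weights_limit_max_order[OF ls]
  by blast

end
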